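(* For all positive integers $n$, \[ \sum_{k=0}^{n} (-1)^k D(n-k,k) = \begin{cases} 0, &\text{if $n$ is odd,} \\ -1, &\text{if $n \equiv 2 \pmod{4}$,} \\ 1, &\text{if $n \equiv 0 \pmod{4}$.} \end{cases} \]
   Context: For non-negative integers $m,n$, the Delannoy number $D(m,n)$ is the number of lattice paths from $(0,0)$ to $(m,n)$ using only steps from $(i,j)$ to $(i+1,j)$, $(i,j+1)$ or $(i+1,j+1)$. *)

theory Defs
  imports Main
begin

text \<open>Steps of a Delannoy lattice path: east (1,0), north (0,1), diagonal (1,1).
  A path from (0,0) to (m,n) is identified with its list of steps.\<close>

definition delannoy_steps :: "(nat \<times> nat) set" where
  "delannoy_steps = {(1,0), (0,1), (1,1)}"

definition delannoy_paths :: "nat \<Rightarrow> nat \<Rightarrow> (nat \<times> nat) list set" where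
  "delannoy_paths m n = {ps. set ps \<subseteq> delannoy_steps \<and>
      sum_list (map fst ps) = m \<and> sum_list (map snd ps) = n}"

definition delannoy :: "nat \<Rightarrow> nat \<Rightarrow> nat" where
  "delannoy m n = card (delannoy_paths m n)"

end

theory Submission
  imports Defs
begin

text \<open>The first and last terms of the alternating antidiagonal sum are \<open>1\<close> and
  \<open>\<plusminus>1\<close>, and on the interior terms the recurrence
  \<open>D(m+1,n+1) = D(m,n+1) + D(m+1,n) + D(m,n)\<close> splits the sum for \<open>n+2\<close> into two copies of
  the sum for \<open>n+1\<close> with opposite signs, which cancel up to boundary terms, and minus the
  sum for \<open>n\<close>. Hence the sums satisfy \<open>S(n+2) = -S(n)\<close> with \<open>S(0) = 1\<close>, \<open>S(1) = 0\<close>.\<close>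

lemma length_le_sum_steps:
  "set ps \<subseteq> delannoy_steps \<Longrightarrow> length ps \<le> sum_list (map fst ps) + sum_list (map snd ps)"
  by (induction ps) (auto simp: delannoy_steps_def)

lemma finite_delannoy_paths: "finite (delannoy_paths m n)"
proof (rule finite_subset)
  show "delannoy_paths m n \<subseteq> {ps. set ps \<subseteq> delannoy_steps \<and> length ps \<le> m + n}"
    using length_le_sum_steps by (auto simp: delannoy_paths_def)
  show "finite {ps. set ps \<subseteq> delannoy_steps \<and> length ps \<le> m + n}"
    by (rule finite_lists_length_le) (simp add: delannoy_steps_def)
qed

lemma Cons_in_delannoy_paths:
  "s # ps \<in> delannoy_paths m n \<longleftrightarrow>
     s \<in> delannoy_steps \<and> fst s \<le> m \<and> snd s \<le> n \<and> ps \<in> delannoy_paths (m - fst s) (n - snd s)"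
  by (auto simp: delannoy_paths_def)

lemma delannoy_paths_0_0: "delannoy_paths 0 0 = {[]}"
proof -
  have "ps = []" if "ps \<in> delannoy_paths 0 0" for ps
    using that by (cases ps) (auto simp: Cons_in_delannoy_paths delannoy_steps_def)
  then show ?thesis by (auto simp: delannoy_paths_def)
qed

lemma Nil_notin_delannoy_paths: "m + n > 0 \<Longrightarrow> [] \<notin> delannoy_paths m n"
  by (auto simp: delannoy_paths_def)

lemma delannoy_paths_Suc_0: "delannoy_paths (Suc m) 0 = Cons (1,0) ` delannoy_paths m 0"
proof (rule set_eqI)
  fix ps
  show "ps \<in> delannoy_paths (Suc m) 0 \<longleftrightarrow> ps \<in> Cons (1,0) ` delannoy_paths m 0"
    using Nil_notin_delannoy_paths[of "Suc m" 0]
    by (cases ps) (auto simp: Cons_in_delannoy_paths delannoy_steps_def)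
qed

lemma delannoy_paths_0_Suc: "delannoy_paths 0 (Suc n) = Cons (0,1) ` delannoy_paths 0 n"
proof (rule set_eqI)
  fix ps
  show "ps \<in> delannoy_paths 0 (Suc n) \<longleftrightarrow> ps \<in> Cons (0,1) ` delannoy_paths 0 n"
    using Nil_notin_delannoy_paths[of 0 "Suc n"]
    by (cases ps) (auto simp: Cons_in_delannoy_paths delannoy_steps_def)
qed

lemma delannoy_paths_Suc_Suc:
  "delannoy_paths (Suc m) (Suc n) =
     Cons (1,0) ` delannoy_paths m (Suc n) \<union> Cons (0,1) ` delannoy_paths (Suc m) n
       \<union> Cons (1,1) ` delannoy_paths m n"
  (is "_ = ?E \<union> ?N \<union> ?D")
proof (rule set_eqI)
  fix ps
  show "ps \<in> delannoy_paths (Suc m) (Suc n) \<longleftrightarrow> ps \<in> ?E \<union> ?N \<union> ?D"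
    using Nil_notin_delannoy_paths[of "Suc m" "Suc n"]
    by (cases ps) (auto simp: Cons_in_delannoy_paths delannoy_steps_def)
qed

lemma delannoy_0_left [simp]: "delannoy 0 n = 1"
  by (induction n) (simp_all add: delannoy_def delannoy_paths_0_0 delannoy_paths_0_Suc card_image)

lemma delannoy_0_right [simp]: "delannoy m 0 = 1"
  by (induction m) (simp_all add: delannoy_def delannoy_paths_0_0 delannoy_paths_Suc_0 card_image)

lemma delannoy_Suc_Suc:
  "delannoy (Suc m) (Suc n) = delannoy m (Suc n) + delannoy (Suc m) n + delannoy m n"
proof -
  let ?E = "Cons (1,0) ` delannoy_paths m (Suc n)"
  let ?N = "Cons (0,1) ` delannoy_paths (Suc m) n"
  let ?D = "Cons (1,1) ` delannoy_paths m n"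
  have "card (?E \<union> ?N \<union> ?D) = card ?E + card ?N + card ?D"
    by (subst card_Un_disjoint; (subst card_Un_disjoint)?) (auto simp: finite_delannoy_paths)
  then show ?thesis
    by (simp add: delannoy_def delannoy_paths_Suc_Suc card_image)
qed

definition alternating_delannoy_sum :: "nat \<Rightarrow> int" where
  "alternating_delannoy_sum n = (\<Sum>k\<le>n. (-1) ^ k * int (delannoy (n - k) k))"

lemma alternating_delannoy_sum_Suc_Suc:
  "alternating_delannoy_sum (Suc (Suc n)) = - alternating_delannoy_sum n"
proof -
  let ?S = alternating_delannoy_sum
  have shifted_column: "(\<Sum>k\<le>n. (-1::int) ^ Suc k * int (delannoy (n - k) (Suc k))) = ?S (Suc n) - 1"
    using sum.atMost_Suc_shift[of "\<lambda>k. (-1::int) ^ k * int (delannoy (Suc n - k) k)" n]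
    by (simp add: alternating_delannoy_sum_def)
  have shifted_row:
    "(\<Sum>k\<le>n. (-1::int) ^ Suc k * int (delannoy (Suc n - k) k)) = (-1) ^ Suc n - ?S (Suc n)"
    using sum.atMost_Suc[of "\<lambda>k. (-1::int) ^ k * int (delannoy (Suc n - k) k)" n]
    by (simp add: alternating_delannoy_sum_def sum_negf)
  have diagonal: "(\<Sum>k\<le>n. (-1::int) ^ Suc k * int (delannoy (n - k) k)) = - ?S n"
    by (simp add: alternating_delannoy_sum_def sum_negf)
  have interior: "(-1::int) ^ Suc k * int (delannoy (Suc n - k) (Suc k)) =
      (-1) ^ Suc k * int (delannoy (n - k) (Suc k)) + (-1) ^ Suc k * int (delannoy (Suc n - k) k)
      + (-1) ^ Suc k * int (delannoy (n - k) k)" if "k \<le> n" for k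
    using that by (simp add: Suc_diff_le delannoy_Suc_Suc algebra_simps)
  have "?S (Suc (Suc n)) =
      1 + (\<Sum>k\<le>n. (-1::int) ^ Suc k * int (delannoy (Suc n - k) (Suc k))) + (-1) ^ n"
    using sum.atMost_Suc_shift[of "\<lambda>k. (-1::int) ^ k * int (delannoy (Suc (Suc n) - k) k)" "Suc n"]
    by (simp add: alternating_delannoy_sum_def)
  also have "(\<Sum>k\<le>n. (-1::int) ^ Suc k * int (delannoy (Suc n - k) (Suc k))) =
      (\<Sum>k\<le>n. (-1) ^ Suc k * int (delannoy (n - k) (Suc k)) + (-1) ^ Suc k * int (delannoy (Suc n - k) k)
        + (-1) ^ Suc k * int (delannoy (n - k) k))"
    using interior by (intro sum.cong) simp_all
  also have "\<dots> = (?S (Suc n) - 1) + ((-1) ^ Suc n - ?S (Suc n)) - ?S n"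
    unfolding sum.distrib shifted_column shifted_row diagonal by simp
  finally show ?thesis by simp
qed

lemma alternating_delannoy_sum_even: "alternating_delannoy_sum (2 * m) = (-1) ^ m"
proof (induction m)
  case 0
  show ?case by (simp add: alternating_delannoy_sum_def)
next
  case (Suc m)
  then show ?case using alternating_delannoy_sum_Suc_Suc[of "2 * m"] by simp
qed

lemma alternating_delannoy_sum_odd: "alternating_delannoy_sum (Suc (2 * m)) = 0"
proof (induction m)
  case 0
  show ?case by (simp add: alternating_delannoy_sum_def)
next
  case (Suc m)
  then show ?case using alternating_delannoy_sum_Suc_Suc[of "Suc (2 * m)"] by simp
qed

theorem corollary5p2:
  fixes n :: nat
  assumes "n > 0"
  shows "(\<Sum>k=0..n. (-1::int) ^ k * int (delannoy (n - k) k)) =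
    (if odd n then 0 else if n mod 4 = 2 then -1 else 1)"
proof -
  have "alternating_delannoy_sum n = (if odd n then 0 else if n mod 4 = 2 then -1 else 1)"
  proof (cases "even n")
    case True
    define m where "m = n div 2"
    with True have n: "n = 2 * m" by simp
    have "n mod 4 = 2 \<longleftrightarrow> odd m" unfolding n by presburger
    moreover have "alternating_delannoy_sum n = (-1) ^ m"
      unfolding n by (rule alternating_delannoy_sum_even)
    ultimately show ?thesis using True by simp
  next
    case False
    define m where "m = n div 2"
    with False have n: "n = Suc (2 * m)" by simp
    have "alternating_delannoy_sum n = 0"
      unfolding n by (rule alternating_delannoy_sum_odd)
    then show ?thesis using False by simp
  qed
  then show ?thesis unfolding alternating_delannoy_sum_def atLeast0AtMost .
qed

end
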